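(* Let $n\ge 1$ and let $IB_n^+\subset IB_n$ be the set of positive partial permutation braids. If $b_1,b_2\in IB_n^+$ induce the same partial permutation of their strings, i.e. $\tau_n(b_1)=\tau_n(b_2)$, then $b_1=b_2$. Moreover, for every $s\in I_n$ there exists $b\in IB_n^+$ with $\tau_n(b)=s$.
   Context: The inverse braid monoid $IB_n$ is the monoid of partial braids on $n$ strings: geometric braids on $n$ strings from which some (possibly none or all) strings have been deleted, considered up to isotopy; multiplication is stacking followed by removal of every arc that does not join the top and bottom planes. It is generated by the Artin generators $\sigma_i^{\pm1}$ ($1\le i\le n-1$) and $\epsilon$ (the trivial braid with the first string deleted). $I_n$ denotes the symmetric inverse monoid (the monoid of partial injections of $\{1,\dots,n\}$), and $\tau_n:IB_n\to I_n$ is the canonical homomorphism sending a partial braid to the partial permutation of $\{1,\dots,n\}$ given by its strings (start point $\mapsto$ end point). A positive partial braid is an element of $IB_n$ that can be written as a word in the generators $\sigma_i$ ($1\le i\le n-1$) and $\epsilon$ with no occurrence of any $\sigma_i^{-1}$. A positive partial permutation braid is a positive partial braid that can be drawn as a geometric positive partial braid in which every pair of strings crosses at most once. $IB_n^+$ denotes the set of positive partial permutation braids. *)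

theory Defs
  imports Main
begin

text \<open>
  A word in the generators sigma_i, sigma_i^-1 (1 <= i <= n-1) and epsilon is drawn
  as a diagram on n slots (positions 1..n, top to bottom reading left to right in the word).
  Strings are labelled by their start positions.  epsilon cuts the arc at slot 1; the string
  occupying slot 1 at that moment is killed (its arcs do not join top and bottom, so it is
  removed entirely).  The partial braid represented by a word is determined by the set A of
  start points of surviving strings, the set B of their end points, and the braid on the
  k = card A surviving strings (an element of the Artin braid group B_k, given by its
  standard presentation), obtained by deleting all killed strings.
\<close>

datatype gen = Sig nat | SigInv nat | Eps

definition valid_word :: "nat \<Rightarrow> gen list \<Rightarrow> bool" where
  "valid_word n w \<longleftrightarrow> (\<forall>g\<in>set w. case g of
       Sig i \<Rightarrow> 1 \<le> i \<and> i < n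
     | SigInv i \<Rightarrow> 1 \<le> i \<and> i < n
     | Eps \<Rightarrow> True)"

definition positive_word :: "gen list \<Rightarrow> bool" where
  "positive_word w \<longleftrightarrow> (\<forall>i. SigInv i \<notin> set w)"

text \<open>slot contents: slot \<Rightarrow> label of the string currently at that slot\<close>
definition sw :: "nat \<Rightarrow> (nat \<Rightarrow> nat) \<Rightarrow> (nat \<Rightarrow> nat)" where
  "sw i st = st(i := st (Suc i), Suc i := st i)"

fun killed :: "gen list \<Rightarrow> (nat \<Rightarrow> nat) \<Rightarrow> nat set" where
  "killed [] st = {}"
| "killed (Sig i # w) st = killed w (sw i st)"
| "killed (SigInv i # w) st = killed w (sw i st)"
| "killed (Eps # w) st = insert (st 1) (killed w st)"

definition live :: "nat \<Rightarrow> gen list \<Rightarrow> nat set" where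
  "live n w = {1..n} - killed w id"

text \<open>position at the bottom of the string starting at position p\<close>
fun track :: "gen list \<Rightarrow> nat \<Rightarrow> nat" where
  "track [] p = p"
| "track (Sig i # w) p = track w (if p = i then Suc i else if p = Suc i then i else p)"
| "track (SigInv i # w) p = track w (if p = i then Suc i else if p = Suc i then i else p)"
| "track (Eps # w) p = track w p"

definition tau :: "nat \<Rightarrow> gen list \<Rightarrow> (nat \<Rightarrow> nat option)" where
  "tau n w = (\<lambda>p. if p \<in> live n w then Some (track w p) else None)"

text \<open>the braid word on the surviving strings (letters (r, True) = sigma_r, (r, False) = sigma_r^-1)\<close>
fun red :: "nat set \<Rightarrow> gen list \<Rightarrow> (nat \<Rightarrow> nat) \<Rightarrow> (nat \<times> bool) list" where
  "red L [] st = []"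
| "red L (Sig i # w) st =
     (if st i \<in> L \<and> st (Suc i) \<in> L then [(card {p. 1 \<le> p \<and> p \<le> i \<and> st p \<in> L}, True)] else [])
     @ red L w (sw i st)"
| "red L (SigInv i # w) st =
     (if st i \<in> L \<and> st (Suc i) \<in> L then [(card {p. 1 \<le> p \<and> p \<le> i \<and> st p \<in> L}, False)] else [])
     @ red L w (sw i st)"
| "red L (Eps # w) st = red L w st"

inductive braid_eq :: "nat \<Rightarrow> (nat \<times> bool) list \<Rightarrow> (nat \<times> bool) list \<Rightarrow> bool" for k where
  refl: "braid_eq k u u"
| sym: "braid_eq k u v \<Longrightarrow> braid_eq k v u"
| trans: "braid_eq k u v \<Longrightarrow> braid_eq k v x \<Longrightarrow> braid_eq k u x"
| ctx: "braid_eq k u v \<Longrightarrow> braid_eq k (x @ u @ y) (x @ v @ y)"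
| inv: "1 \<le> i \<Longrightarrow> i < k \<Longrightarrow> braid_eq k [(i, b), (i, \<not> b)] []"
| comm: "1 \<le> i \<Longrightarrow> i + 1 < j \<Longrightarrow> j < k \<Longrightarrow>
           braid_eq k [(i, True), (j, True)] [(j, True), (i, True)]"
| braid: "1 \<le> i \<Longrightarrow> i + 1 < k \<Longrightarrow>
           braid_eq k [(i, True), (i + 1, True), (i, True)] [(i + 1, True), (i, True), (i + 1, True)]"

definition pb_eq :: "nat \<Rightarrow> gen list \<Rightarrow> gen list \<Rightarrow> bool" where
  "pb_eq n w1 w2 \<longleftrightarrow>
     live n w1 = live n w2 \<and>
     track w1 ` live n w1 = track w2 ` live n w2 \<and>
     braid_eq (card (live n w1)) (red (live n w1) w1 id) (red (live n w2) w2 id)"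

text \<open>pairs of labels of strings crossing at each sigma letter\<close>
fun crossings :: "gen list \<Rightarrow> (nat \<Rightarrow> nat) \<Rightarrow> (nat \<times> nat) list" where
  "crossings [] st = []"
| "crossings (Sig i # w) st = (st i, st (Suc i)) # crossings w (sw i st)"
| "crossings (SigInv i # w) st = (st i, st (Suc i)) # crossings w (sw i st)"
| "crossings (Eps # w) st = crossings w st"

definition crosses_at_most_once :: "nat \<Rightarrow> gen list \<Rightarrow> bool" where
  "crosses_at_most_once n w \<longleftrightarrow>
     (\<forall>a\<in>live n w. \<forall>b\<in>live n w. a \<noteq> b \<longrightarrow>
        length (filter (\<lambda>(x, y). {x, y} = {a, b}) (crossings w id)) \<le> 1)"

definition in_IBn_plus :: "nat \<Rightarrow> gen list \<Rightarrow> bool" where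
  "in_IBn_plus n w \<longleftrightarrow> (\<exists>w'. valid_word n w' \<and> positive_word w' \<and>
      crosses_at_most_once n w' \<and> pb_eq n w w')"

definition partial_perm :: "nat \<Rightarrow> (nat \<Rightarrow> nat option) \<Rightarrow> bool" where
  "partial_perm n s \<longleftrightarrow> dom s \<subseteq> {1..n} \<and> ran s \<subseteq> {1..n} \<and> inj_on s (dom s)"

end

(*
  A word w determines the set L of its surviving strings and, through red, a braid word on them;
  its letters act by adjacent transpositions on the list of L in slot order, taking the initial
  order to the final one, and both orders are determined by tau n w. When w is positive and two
  strings cross at most once, this braid word exchanges every pair at most once, i.e. it is a
  reduced word. Uniqueness is therefore Matsumoto's theorem for positive words: two reduced words
  with the same endpoints are equal in the braid group. This follows by induction on the length:
  if the first letters differ, both adjacent pairs are inversions of the target order, and the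
  two words can be completed through a commutation or a braid relation to a common reduced word.
  For existence, the strings outside the domain of s are dragged one by one to slot 1 and cut
  off by epsilon; a reduced positive word for a permutation extending s then braids the
  remaining strings into place.
*)

theory Submission
  imports Defs "HOL-Combinatorics.Transposition"
begin

section \<open>Words acting on lists by adjacent transpositions\<close>

(* Letter r exchanges the entries at positions r - 1 and r (counted from 0). *)
definition swap_adj :: "nat \<Rightarrow> 'a list \<Rightarrow> 'a list" where
  "swap_adj r xs = xs[r - 1 := xs ! r, r := xs ! (r - 1)]"

definition adj_pair :: "nat \<Rightarrow> 'a list \<Rightarrow> 'a set" where
  "adj_pair r xs = {xs ! (r - 1), xs ! r}"

fun act :: "'a list \<Rightarrow> (nat \<times> bool) list \<Rightarrow> 'a list" where
  "act xs [] = xs"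
| "act xs (l # u) = act (swap_adj (fst l) xs) u"

fun swapped_pairs :: "'a list \<Rightarrow> (nat \<times> bool) list \<Rightarrow> 'a set list" where
  "swapped_pairs xs [] = []"
| "swapped_pairs xs (l # u) = adj_pair (fst l) xs # swapped_pairs (swap_adj (fst l) xs) u"

lemma length_swap_adj [simp]: "length (swap_adj r xs) = length xs"
  by (simp add: swap_adj_def)

lemma nth_swap_adj:
  assumes "1 \<le> r" "r < length xs"
  shows "swap_adj r xs ! p = (if p = r - 1 then xs ! r else if p = r then xs ! (r - 1) else xs ! p)"
  using assms by (auto simp: swap_adj_def nth_list_update)

lemma set_swap_adj: "1 \<le> r \<Longrightarrow> r < length xs \<Longrightarrow> set (swap_adj r xs) = set xs"
  unfolding swap_adj_def by (rule set_swap) auto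

lemma distinct_swap_adj: "1 \<le> r \<Longrightarrow> r < length xs \<Longrightarrow> distinct (swap_adj r xs) \<longleftrightarrow> distinct xs"
  unfolding swap_adj_def by (rule distinct_swap) auto

lemma swap_adj_append: "swap_adj (Suc (length A)) (A @ x # y # C) = A @ y # x # C"
  by (simp add: swap_adj_def nth_append list_update_append)

lemma swap_adj_append2: "swap_adj (Suc (Suc (length A))) (A @ x # y # z # C) = A @ x # z # y # C"
  using swap_adj_append[of "A @ [x]"] by simp

lemma adj_pair_append: "adj_pair (Suc (length A)) (A @ x # y # C) = {x, y}"
  by (simp add: adj_pair_def nth_append)

lemma adj_pair_append2: "adj_pair (Suc (Suc (length A))) (A @ x # y # z # C) = {y, z}"
  using adj_pair_append[of "A @ [x]"] by simp

lemma split_at_adj: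
  assumes "1 \<le> r" "r < length xs"
  obtains A x y C where "xs = A @ x # y # C" "r = Suc (length A)"
proof
  show "xs = take (r - 1) xs @ xs ! (r - 1) # xs ! r # drop (Suc r) xs"
    using assms by (metis Cons_nth_drop_Suc Suc_pred' append_take_drop_id less_imp_diff_less
        less_le_trans zero_less_one)
  show "r = Suc (length (take (r - 1) xs))"
    using assms by simp
qed

lemma split_at_adj2:
  assumes "1 \<le> r" "Suc r < length xs"
  obtains A x y z C where "xs = A @ x # y # z # C" "r = Suc (length A)"
proof -
  have "r < length xs"
    using assms(2) by simp
  then obtain A x y D where "xs = A @ x # y # D" "r = Suc (length A)"
    using split_at_adj[OF assms(1)] by blast
  moreover from this obtain z C where "D = z # C"
    using assms(2) by (cases D) auto
  ultimately show ?thesis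
    using that by blast
qed

lemma swap_adj_swap_adj: "1 \<le> r \<Longrightarrow> r < length xs \<Longrightarrow> swap_adj r (swap_adj r xs) = xs"
  by (rule nth_equalityI) (auto simp: nth_swap_adj)

lemma swap_adj_commute:
  "1 \<le> i \<Longrightarrow> i + 1 < j \<Longrightarrow> j < length xs \<Longrightarrow>
   swap_adj i (swap_adj j xs) = swap_adj j (swap_adj i xs)"
  unfolding swap_adj_def by (simp add: nth_list_update_neq list_update_swap)

lemma adj_pair_swap_adj_far:
  assumes "1 \<le> i" "i + 1 < j" "j < length xs"
  shows "adj_pair j (swap_adj i xs) = adj_pair j xs" "adj_pair i (swap_adj j xs) = adj_pair i xs"
  using assms by (auto simp: adj_pair_def nth_swap_adj)

lemma swap_adj_braid:
  assumes "1 \<le> i" "Suc i < length xs"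
  shows "swap_adj i (swap_adj (Suc i) (swap_adj i xs)) = swap_adj (Suc i) (swap_adj i (swap_adj (Suc i) xs))"
proof -
  obtain A x y z C where "xs = A @ x # y # z # C" "i = Suc (length A)"
    using split_at_adj2 assms .
  then show ?thesis
    by (simp add: swap_adj_append swap_adj_append2)
qed

lemma act_append: "act xs (u @ v) = act (act xs u) v"
  by (induction u arbitrary: xs) auto

lemma length_act [simp]: "length (act xs u) = length xs"
  by (induction u arbitrary: xs) auto

lemma length_swapped_pairs [simp]: "length (swapped_pairs xs u) = length u"
  by (induction u arbitrary: xs) auto

lemma swapped_pairs_append: "swapped_pairs xs (u @ v) = swapped_pairs xs u @ swapped_pairs (act xs u) v"
  by (induction u arbitrary: xs) auto

lemma braid_eq_act: "braid_eq k u v \<Longrightarrow> length xs = k \<Longrightarrow> act xs u = act xs v"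
proof (induction arbitrary: xs rule: braid_eq.induct)
  case (ctx u v x y)
  then show ?case by (simp add: act_append)
next
  case (comm i j)
  then show ?case using swap_adj_commute[of i j xs] by simp
next
  case (braid i)
  then show ?case using swap_adj_braid[of i xs] by simp
qed (simp_all add: swap_adj_swap_adj)

section \<open>Inversions\<close>

definition precedes :: "'a list \<Rightarrow> 'a \<Rightarrow> 'a \<Rightarrow> bool" where
  "precedes xs a b \<longleftrightarrow> (\<exists>i j. i < j \<and> j < length xs \<and> xs ! i = a \<and> xs ! j = b)"

definition inversions :: "'a list \<Rightarrow> 'a list \<Rightarrow> 'a set set" where
  "inversions xs ys = {{a, b} | a b. precedes xs a b \<and> precedes ys b a}"

lemma precedes_Nil [simp]: "\<not> precedes [] a b"
  by (simp add: precedes_def)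

lemma precedes_Cons: "precedes (x # xs) a b \<longleftrightarrow> (a = x \<and> b \<in> set xs) \<or> precedes xs a b"
proof
  assume "precedes (x # xs) a b"
  then obtain i j where "i < j" "j < Suc (length xs)" "(x # xs) ! i = a" "(x # xs) ! j = b"
    unfolding precedes_def by auto
  then show "(a = x \<and> b \<in> set xs) \<or> precedes xs a b"
    unfolding precedes_def by (cases i; cases j) auto
next
  assume "(a = x \<and> b \<in> set xs) \<or> precedes xs a b"
  then show "precedes (x # xs) a b"
  proof
    assume "a = x \<and> b \<in> set xs"
    then obtain j where "j < length xs" "xs ! j = b" "a = x" by (auto simp: in_set_conv_nth)
    then show ?thesis unfolding precedes_def by (intro exI[of _ 0] exI[of _ "Suc j"]) simp
  next
    assume "precedes xs a b"
    then obtain i j where "i < j" "j < length xs" "xs ! i = a" "xs ! j = b"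
      unfolding precedes_def by blast
    then show ?thesis unfolding precedes_def by (intro exI[of _ "Suc i"] exI[of _ "Suc j"]) simp
  qed
qed

lemma precedes_append:
  "precedes (A @ B) a b \<longleftrightarrow> precedes A a b \<or> (a \<in> set A \<and> b \<in> set B) \<or> precedes B a b"
  by (induction A) (auto simp: precedes_Cons)

lemma precedes_nth: "i < j \<Longrightarrow> j < length xs \<Longrightarrow> precedes xs (xs ! i) (xs ! j)"
  unfolding precedes_def by auto

lemma precedes_set: "precedes xs a b \<Longrightarrow> a \<in> set xs \<and> b \<in> set xs"
  unfolding precedes_def by auto

lemma precedes_neq: "distinct xs \<Longrightarrow> precedes xs a b \<Longrightarrow> a \<noteq> b"
  unfolding precedes_def by (auto simp: nth_eq_iff_index_eq)

lemma precedes_asym: "distinct xs \<Longrightarrow> precedes xs a b \<Longrightarrow> \<not> precedes xs b a"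
  unfolding precedes_def by (metis less_trans nth_eq_iff_index_eq order.asym)

lemma precedes_total:
  "a \<in> set xs \<Longrightarrow> b \<in> set xs \<Longrightarrow> a \<noteq> b \<Longrightarrow> precedes xs a b \<or> precedes xs b a"
  unfolding precedes_def by (metis in_set_conv_nth linorder_neqE_nat)

lemma transp_precedes: "distinct xs \<Longrightarrow> transp (precedes xs)"
  unfolding precedes_def transp_def by (metis less_trans nth_eq_iff_index_eq)

lemma precedes_swap_adj:
  assumes "distinct xs" "1 \<le> r" "r < length xs" "a \<noteq> b"
  shows "precedes (swap_adj r xs) a b \<longleftrightarrow> precedes xs a b \<noteq> ({a, b} = adj_pair r xs)"
proof -
  obtain A x y C where xs: "xs = A @ x # y # C" and r: "r = Suc (length A)"
    using split_at_adj assms(2,3) .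
  show ?thesis
    using assms(1,4) unfolding xs r swap_adj_append adj_pair_append
    by (auto simp: precedes_append precedes_Cons doubleton_eq_iff dest: precedes_set)
qed

lemma mem_inversions_iff:
  assumes "distinct xs" "distinct ys" "set xs = set ys" "a \<in> set xs" "b \<in> set xs" "a \<noteq> b"
  shows "{a, b} \<in> inversions xs ys \<longleftrightarrow> precedes xs a b \<noteq> precedes ys a b"
proof
  assume "{a, b} \<in> inversions xs ys"
  then obtain c d where "{a, b} = {c, d}" "precedes xs c d" "precedes ys d c"
    unfolding inversions_def by blast
  then show "precedes xs a b \<noteq> precedes ys a b"
    using precedes_asym[OF assms(1)] precedes_asym[OF assms(2)] unfolding doubleton_eq_iff by blast
next
  assume "precedes xs a b \<noteq> precedes ys a b"
  then have "precedes xs a b \<and> precedes ys b a \<or> precedes xs b a \<and> precedes ys a b"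
    using assms precedes_total[of a xs b] precedes_total[of a ys b] by auto
  then show "{a, b} \<in> inversions xs ys"
    unfolding inversions_def by (auto simp: insert_commute)
qed

lemma inversions_elem:
  assumes "distinct xs" "Q \<in> inversions xs ys"
  obtains a b where "Q = {a, b}" "a \<noteq> b" "a \<in> set xs" "b \<in> set xs"
  using assms unfolding inversions_def by (blast dest: precedes_set precedes_neq)

lemma inversions_self: "distinct xs \<Longrightarrow> inversions xs xs = {}"
  by (auto simp: inversions_def dest: precedes_asym)

lemma finite_inversions: "finite (inversions xs ys)"
proof (rule finite_subset)
  show "inversions xs ys \<subseteq> Pow (set xs)"
    unfolding inversions_def by (auto dest: precedes_set)
qed simp

lemma mem_inversions_swap_adj:
  assumes "distinct xs" "distinct ys" "set xs = set ys" "1 \<le> r" "r < length xs"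
  shows "Q \<in> inversions (swap_adj r xs) ys \<longleftrightarrow> (Q \<in> inversions xs ys \<longleftrightarrow> Q \<noteq> adj_pair r xs)"
proof (cases "\<exists>a b. Q = {a, b} \<and> a \<noteq> b \<and> a \<in> set xs \<and> b \<in> set xs")
  case True
  then obtain a b where Q: "Q = {a, b}" "a \<noteq> b" "a \<in> set xs" "b \<in> set xs"
    by blast
  have d: "distinct (swap_adj r xs)" and s: "set (swap_adj r xs) = set ys"
    using assms by (simp_all add: distinct_swap_adj set_swap_adj)
  have "Q \<in> inversions (swap_adj r xs) ys \<longleftrightarrow> precedes (swap_adj r xs) a b \<noteq> precedes ys a b"
    using mem_inversions_iff[OF d assms(2) s, of a b] Q s assms(3) by simp
  also have "\<dots> \<longleftrightarrow> (precedes xs a b \<noteq> precedes ys a b) \<noteq> (Q = adj_pair r xs)"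
    using precedes_swap_adj[OF assms(1,4,5) Q(2)] Q(1) by auto
  also have "\<dots> \<longleftrightarrow> (Q \<in> inversions xs ys \<longleftrightarrow> Q \<noteq> adj_pair r xs)"
    using mem_inversions_iff[OF assms(1-3) Q(3,4,2)] Q(1) by simp
  finally show ?thesis .
next
  case False
  have d: "distinct (swap_adj r xs)" and s: "set (swap_adj r xs) = set xs"
    using assms by (simp_all add: distinct_swap_adj set_swap_adj)
  have "Q \<notin> inversions zs ys" if zs: "distinct zs" "set zs = set xs" for zs
  proof
    assume "Q \<in> inversions zs ys"
    then obtain a b where "Q = {a, b}" "a \<noteq> b" "a \<in> set zs" "b \<in> set zs"
      using inversions_elem[OF zs(1)] by blast
    then show False
      using False zs(2) by blast
  qed
  then have "Q \<notin> inversions (swap_adj r xs) ys" "Q \<notin> inversions xs ys"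
    using d s assms(1) by blast+
  moreover have "xs ! (r - 1) \<noteq> xs ! r" "xs ! (r - 1) \<in> set xs" "xs ! r \<in> set xs"
    using assms(1,4,5) by (simp_all add: nth_eq_iff_index_eq)
  then have "Q \<noteq> adj_pair r xs"
    using False unfolding adj_pair_def by blast
  ultimately show ?thesis
    by blast
qed

lemma inversions_swap_adj:
  assumes "distinct xs" "distinct ys" "set xs = set ys" "1 \<le> r" "r < length xs"
    and "adj_pair r xs \<in> inversions xs ys"
  shows "inversions (swap_adj r xs) ys = inversions xs ys - {adj_pair r xs}"
  using mem_inversions_swap_adj[OF assms(1-5)] assms(6) by blast

lemma inversions_trans:
  assumes "distinct xs" "distinct ys" "set xs = set ys" "precedes xs a b" "precedes xs b c"
    and "{a, b} \<in> inversions xs ys" "{b, c} \<in> inversions xs ys"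
  shows "{a, c} \<in> inversions xs ys"
proof -
  have abc: "a \<in> set xs" "b \<in> set xs" "c \<in> set xs" "a \<noteq> b" "b \<noteq> c"
    using precedes_set[OF assms(4)] precedes_set[OF assms(5)]
      precedes_neq[OF assms(1,4)] precedes_neq[OF assms(1,5)] by simp_all
  have "\<not> precedes ys a b" "\<not> precedes ys b c"
    using mem_inversions_iff[OF assms(1-3) abc(1,2,4)] mem_inversions_iff[OF assms(1-3) abc(2,3,5)]
      assms(4-7) by simp_all
  then have "precedes ys c b" "precedes ys b a"
    using precedes_total[of a ys b] precedes_total[of b ys c] abc assms(3) by auto
  then have "precedes ys c a"
    by (rule transpD[OF transp_precedes[OF assms(2)]])
  moreover have "precedes xs a c"
    by (rule transpD[OF transp_precedes[OF assms(1)] assms(4,5)])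
  ultimately show ?thesis
    unfolding inversions_def by blast
qed

lemma sorted_wrt_precedes_imp_eq:
  "sorted_wrt (precedes ys) xs \<Longrightarrow> distinct ys \<Longrightarrow> set xs = set ys \<Longrightarrow> xs = ys"
proof (induction xs arbitrary: ys)
  case Nil
  then show ?case by simp
next
  case (Cons x xs)
  obtain c ys' where ys: "ys = c # ys'"
    using Cons.prems(3) by (cases ys) auto
  have "c = x"
  proof (rule ccontr)
    assume "c \<noteq> x"
    then have "precedes ys x c" "precedes ys c x"
      using Cons.prems(1,3) ys by (auto simp: precedes_Cons)
    then show False
      using precedes_asym[OF Cons.prems(2)] by blast
  qed
  have "\<forall>y\<in>set xs. precedes ys x y"
    using Cons.prems(1) by simp
  then have x: "x \<notin> set xs"
    using precedes_neq[OF Cons.prems(2)] by blast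
  have "precedes ys' a b" if "a \<in> set xs" "precedes ys a b" for a b
    using that x unfolding ys \<open>c = x\<close> precedes_Cons by auto
  then have "sorted_wrt (precedes ys') xs"
    using Cons.prems(1) sorted_wrt_mono_rel[of xs "precedes ys" "precedes ys'"] by simp
  moreover have "set xs = set ys'"
    using Cons.prems(2,3) x unfolding ys \<open>c = x\<close> by (simp add: insert_ident)
  ultimately have "xs = ys'"
    using Cons.IH Cons.prems(2) unfolding ys by simp
  then show ?case
    using ys \<open>c = x\<close> by simp
qed

lemma inversions_empty_iff:
  assumes "distinct xs" "distinct ys" "set xs = set ys"
  shows "inversions xs ys = {} \<longleftrightarrow> xs = ys"
proof
  assume none: "inversions xs ys = {}"
  have "precedes ys (xs ! i) (xs ! j)" if "i < j" "j < length xs" for i j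
  proof -
    have "xs ! i \<noteq> xs ! j" "xs ! i \<in> set xs" "xs ! j \<in> set xs"
      using assms(1) that by (auto simp: nth_eq_iff_index_eq)
    then show ?thesis
      using mem_inversions_iff[OF assms, of "xs ! i" "xs ! j"] precedes_nth[OF that] none by simp
  qed
  then have "sorted_wrt (precedes ys) xs"
    by (simp add: sorted_wrt_iff_nth_less)
  then show "xs = ys"
    using sorted_wrt_precedes_imp_eq assms(2,3) by blast
qed (simp add: assms(2) inversions_self)

lemma adjacent_inversion_exists:
  assumes "distinct xs" "distinct ys" "set xs = set ys" "inversions xs ys \<noteq> {}"
  shows "\<exists>r. 1 \<le> r \<and> r < length xs \<and> adj_pair r xs \<in> inversions xs ys"
proof (rule ccontr)
  assume no_adjacent: "\<not> ?thesis"
  have "precedes ys (xs ! i) (xs ! Suc i)" if "Suc i < length xs" for i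
  proof -
    have "adj_pair (Suc i) xs \<notin> inversions xs ys"
      using no_adjacent that by auto
    then show ?thesis
      using mem_inversions_iff[OF assms(1-3), of "xs ! i" "xs ! Suc i"] precedes_nth[OF _ that]
        assms(1) that by (simp add: adj_pair_def nth_eq_iff_index_eq)
  qed
  then have "sorted_wrt (precedes ys) xs"
    by (simp add: sorted_wrt_iff_nth_Suc_transp[OF transp_precedes[OF assms(2)]])
  then show False
    using sorted_wrt_precedes_imp_eq assms(2-4) inversions_self[OF assms(2)] by blast
qed

section \<open>Reduced words and Matsumoto's theorem\<close>

definition positive_letters :: "nat \<Rightarrow> (nat \<times> bool) list \<Rightarrow> bool" where
  "positive_letters k u \<longleftrightarrow> (\<forall>l \<in> set u. snd l \<and> 1 \<le> fst l \<and> fst l < k)"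

(* Every pair of entries is exchanged at most once: the list counterpart of a positive braid in
   which two strings cross at most once. *)
definition reduced_word :: "'a list \<Rightarrow> (nat \<times> bool) list \<Rightarrow> 'a list \<Rightarrow> bool" where
  "reduced_word xs u ys \<longleftrightarrow>
     positive_letters (length xs) u \<and> distinct (swapped_pairs xs u) \<and> act xs u = ys"

lemma set_act: "positive_letters (length xs) u \<Longrightarrow> set (act xs u) = set xs"
  by (induction u arbitrary: xs) (auto simp: positive_letters_def set_swap_adj)

lemma distinct_act: "positive_letters (length xs) u \<Longrightarrow> distinct (act xs u) \<longleftrightarrow> distinct xs"
  by (induction u arbitrary: xs) (auto simp: positive_letters_def distinct_swap_adj)

lemma reduced_word_target:
  assumes "reduced_word xs u ys" "distinct xs"
  shows "distinct ys" "set xs = set ys"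
  using assms distinct_act set_act unfolding reduced_word_def by blast+

lemma reduced_word_ConsD:
  assumes "reduced_word xs ((r, b) # u) ys"
  shows "b" "1 \<le> r" "r < length xs" "reduced_word (swap_adj r xs) u ys"
  using assms by (auto simp: reduced_word_def positive_letters_def)

lemma set_swapped_pairs:
  assumes "reduced_word xs u ys" "distinct xs"
  shows "set (swapped_pairs xs u) = inversions xs ys"
  using assms
proof (induction u arbitrary: xs)
  case Nil
  then show ?case by (simp add: reduced_word_def inversions_self)
next
  case (Cons l u)
  obtain r b where l: "l = (r, b)"
    by (cases l)
  have r: "1 \<le> r" "r < length xs" and tail: "reduced_word (swap_adj r xs) u ys"
    using reduced_word_ConsD[OF Cons.prems(1)[unfolded l]] by blast+
  note ys = reduced_word_target[OF Cons.prems]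
  have IH: "set (swapped_pairs (swap_adj r xs) u) = inversions (swap_adj r xs) ys"
    using Cons.IH[OF tail] Cons.prems(2) r by (simp add: distinct_swap_adj)
  have "adj_pair r xs \<notin> set (swapped_pairs (swap_adj r xs) u)"
    using Cons.prems(1) unfolding reduced_word_def l by simp
  then have "adj_pair r xs \<in> inversions xs ys"
    using IH mem_inversions_swap_adj[OF Cons.prems(2) ys r] by blast
  then show ?case
    using IH mem_inversions_swap_adj[OF Cons.prems(2) ys r] unfolding l by auto
qed

lemma length_reduced_word:
  assumes "reduced_word xs u ys" "distinct xs"
  shows "length u = card (inversions xs ys)"
proof -
  have "length u = card (set (swapped_pairs xs u))"
    using assms(1) distinct_card[of "swapped_pairs xs u"] by (simp add: reduced_word_def)
  then show ?thesis
    using set_swapped_pairs[OF assms] by simp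
qed

lemma reduced_word_head_inversion:
  assumes "reduced_word xs ((r, b) # u) ys" "distinct xs"
  shows "adj_pair r xs \<in> inversions xs ys"
  using set_swapped_pairs[OF assms] by auto

lemma reduced_word_Cons_iff:
  assumes "distinct xs" "1 \<le> r" "r < length xs" "reduced_word (swap_adj r xs) u ys"
  shows "reduced_word xs ((r, True) # u) ys \<longleftrightarrow> adj_pair r xs \<in> inversions xs ys"
proof -
  have "distinct (swap_adj r xs)"
    using assms by (simp add: distinct_swap_adj)
  then have "set (swapped_pairs (swap_adj r xs) u) = inversions (swap_adj r xs) ys"
    using set_swapped_pairs assms(4) by blast
  moreover have ys: "distinct ys" "set (swap_adj r xs) = set ys"
    using assms(4) \<open>distinct (swap_adj r xs)\<close> distinct_act set_act
    unfolding reduced_word_def by blast+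
  then have "set xs = set ys"
    using assms(2,3) by (simp add: set_swap_adj)
  then have "adj_pair r xs \<in> inversions (swap_adj r xs) ys \<longleftrightarrow> adj_pair r xs \<notin> inversions xs ys"
    using mem_inversions_swap_adj[OF assms(1) ys(1) _ assms(2,3)] by simp
  ultimately show ?thesis
    using assms unfolding reduced_word_def positive_letters_def by auto
qed

lemma reduced_word_Cons:
  assumes "distinct xs" "1 \<le> r" "r < length xs" "reduced_word (swap_adj r xs) u ys"
    and "adj_pair r xs \<in> inversions xs ys"
  shows "reduced_word xs ((r, True) # u) ys"
  using reduced_word_Cons_iff[OF assms(1-4)] assms(5) by simp

lemma reduced_word_exists:
  assumes "distinct xs" "distinct ys" "set xs = set ys"
  shows "\<exists>u. reduced_word xs u ys"
  using assms
proof (induction "card (inversions xs ys)" arbitrary: xs rule: less_induct)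
  case less
  show ?case
  proof (cases "inversions xs ys = {}")
    case True
    then have "reduced_word xs [] ys"
      using inversions_empty_iff[OF less.prems] by (simp add: reduced_word_def positive_letters_def)
    then show ?thesis ..
  next
    case False
    then obtain r where r: "1 \<le> r" "r < length xs" "adj_pair r xs \<in> inversions xs ys"
      using adjacent_inversion_exists less.prems by blast
    have fewer: "card (inversions (swap_adj r xs) ys) < card (inversions xs ys)"
      unfolding inversions_swap_adj[OF less.prems r] by (rule card_Diff1_less[OF finite_inversions r(3)])
    have "distinct (swap_adj r xs)" "set (swap_adj r xs) = set ys"
      using less.prems r by (simp_all add: distinct_swap_adj set_swap_adj)
    then obtain u where u: "reduced_word (swap_adj r xs) u ys"
      using less.hyps[OF fewer] less.prems(2) by blast
    have "reduced_word xs ((r, True) # u) ys"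
      using reduced_word_Cons_iff[OF less.prems(1) r(1,2) u] r(3) by simp
    then show ?thesis ..
  qed
qed

lemma reduced_word_Cons_Cons:
  assumes "distinct xs" "set xs = set ys" "distinct ys"
    and "1 \<le> r" "r < length xs" "1 \<le> r'" "r' < length xs"
    and "adj_pair r xs \<in> inversions xs ys" "adj_pair r' (swap_adj r xs) \<in> inversions xs ys"
    and "adj_pair r' (swap_adj r xs) \<noteq> adj_pair r xs"
    and "reduced_word (swap_adj r' (swap_adj r xs)) z ys"
  shows "reduced_word xs ((r, True) # (r', True) # z) ys"
proof -
  have d: "distinct (swap_adj r xs)" and s: "set (swap_adj r xs) = set ys"
    using assms(1,2,4,5) by (simp_all add: distinct_swap_adj set_swap_adj)
  have "adj_pair r' (swap_adj r xs) \<in> inversions (swap_adj r xs) ys"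
    using inversions_swap_adj[OF assms(1,3,2,4,5,8)] assms(9,10) by simp
  then have "reduced_word (swap_adj r xs) ((r', True) # z) ys"
    using reduced_word_Cons[OF d assms(6)] assms(7,11) by simp
  then show ?thesis
    using reduced_word_Cons[OF assms(1,4,5)] assms(8) by simp
qed

lemma far_heads_common_tail:
  assumes "distinct xs" "reduced_word xs ((i, b) # u) ys" "reduced_word xs ((j, b') # v) ys"
    and "i + 1 < j"
  obtains z where "reduced_word (swap_adj i xs) ((j, True) # z) ys"
    "reduced_word (swap_adj j xs) ((i, True) # z) ys"
proof -
  have i: "1 \<le> i" "i < length xs" and j: "1 \<le> j" "j < length xs"
    using reduced_word_ConsD(2,3) assms(2,3) by blast+
  note ys = reduced_word_target[OF assms(2,1)]
  have P: "adj_pair i xs \<in> inversions xs ys" and Q: "adj_pair j xs \<in> inversions xs ys"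
    using reduced_word_head_inversion assms(1-3) by blast+
  have "adj_pair i xs \<noteq> adj_pair j xs"
    using assms(1,4) i j unfolding adj_pair_def doubleton_eq_iff by (auto simp: nth_eq_iff_index_eq)
  then have P': "adj_pair i (swap_adj j xs) \<in> inversions (swap_adj j xs) ys"
    and Q': "adj_pair j (swap_adj i xs) \<in> inversions (swap_adj i xs) ys"
    using inversions_swap_adj[OF assms(1) ys i P] inversions_swap_adj[OF assms(1) ys j Q] P Q
      adj_pair_swap_adj_far[OF i(1) assms(4) j(2)] by auto
  have d: "distinct (swap_adj i xs)" "distinct (swap_adj j xs)"
    "distinct (swap_adj i (swap_adj j xs))"
    using assms(1) i j by (simp_all add: distinct_swap_adj)
  have "set (swap_adj i (swap_adj j xs)) = set ys"
    using ys(2) i j by (simp add: set_swap_adj)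
  then obtain z where z: "reduced_word (swap_adj i (swap_adj j xs)) z ys"
    using reduced_word_exists[OF d(3) ys(1)] by blast
  have "reduced_word (swap_adj i xs) ((j, True) # z) ys"
    using reduced_word_Cons_iff[OF d(1) j(1)] j(2) Q' z swap_adj_commute[OF i(1) assms(4) j(2)] by simp
  moreover have "reduced_word (swap_adj j xs) ((i, True) # z) ys"
    using reduced_word_Cons_iff[OF d(2) i(1)] i(2) P' z by simp
  ultimately show ?thesis
    using that by blast
qed

lemma adjacent_heads_common_tail:
  assumes "distinct xs" "reduced_word xs ((i, b) # u) ys" "reduced_word xs ((Suc i, b') # v) ys"
  obtains z where "reduced_word (swap_adj i xs) ((Suc i, True) # (i, True) # z) ys"
    "reduced_word (swap_adj (Suc i) xs) ((i, True) # (Suc i, True) # z) ys"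
proof -
  have i: "1 \<le> i" "Suc i < length xs"
    using reduced_word_ConsD(2,3) assms(2,3) by blast+
  note ys = reduced_word_target[OF assms(2,1)]
  obtain A a b c C where xs: "xs = A @ a # b # c # C" and i_eq: "i = Suc (length A)"
    using split_at_adj2 i .
  have swaps: "swap_adj i xs = A @ b # a # c # C" "swap_adj (Suc i) xs = A @ a # c # b # C"
    "swap_adj (Suc i) (A @ b # a # c # C) = A @ b # c # a # C"
    "swap_adj i (A @ b # c # a # C) = A @ c # b # a # C"
    "swap_adj i (A @ a # c # b # C) = A @ c # a # b # C"
    "swap_adj (Suc i) (A @ c # a # b # C) = A @ c # b # a # C"
    unfolding xs i_eq by (simp_all add: swap_adj_append swap_adj_append2)
  have pairs: "adj_pair i xs = {a, b}" "adj_pair (Suc i) xs = {b, c}"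
    "adj_pair (Suc i) (A @ b # a # c # C) = {a, c}" "adj_pair i (A @ b # c # a # C) = {b, c}"
    "adj_pair i (A @ a # c # b # C) = {a, c}" "adj_pair (Suc i) (A @ c # a # b # C) = {a, b}"
    unfolding xs i_eq by (simp_all add: adj_pair_append adj_pair_append2 insert_commute)
  have "distinct [a, b, c]"
    using assms(1) unfolding xs by auto
  then have neq: "{a, b} \<noteq> {a, c}" "{a, b} \<noteq> {b, c}" "{a, c} \<noteq> {b, c}"
    by (auto simp: doubleton_eq_iff)
  have ab: "{a, b} \<in> inversions xs ys" and bc: "{b, c} \<in> inversions xs ys"
    using reduced_word_head_inversion[OF assms(2,1)] reduced_word_head_inversion[OF assms(3,1)]
    unfolding pairs by simp_all
  have ac: "{a, c} \<in> inversions xs ys"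
    by (rule inversions_trans[OF assms(1) ys _ _ ab bc]) (simp_all add: xs precedes_append precedes_Cons)
  have xs_length: "length xs = Suc (Suc (Suc (length A + length C)))"
    unfolding xs by simp
  have x1: "distinct (swap_adj i xs)" "set (swap_adj i xs) = set ys"
    and y1: "distinct (swap_adj (Suc i) xs)" "set (swap_adj (Suc i) xs) = set ys"
    using assms(1) ys(2) i by (simp_all add: distinct_swap_adj set_swap_adj)
  have "distinct (A @ c # b # a # C)" "set (A @ c # b # a # C) = set ys"
    using x1 unfolding swaps by auto
  then obtain z where z: "reduced_word (A @ c # b # a # C) z ys"
    using reduced_word_exists ys(1) by blast
  have Ix1: "inversions (swap_adj i xs) ys = inversions xs ys - {{a, b}}"
    and Iy1: "inversions (swap_adj (Suc i) xs) ys = inversions xs ys - {{b, c}}"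
    using inversions_swap_adj[OF assms(1) ys] i ab bc pairs(1,2) by simp_all
  have "reduced_word (swap_adj i xs) ((Suc i, True) # (i, True) # z) ys"
    by (rule reduced_word_Cons_Cons[OF x1 ys(1)])
      (use i Ix1 ac bc neq z in \<open>simp_all add: swaps pairs insert_commute xs_length\<close>)
  moreover have "reduced_word (swap_adj (Suc i) xs) ((i, True) # (Suc i, True) # z) ys"
    by (rule reduced_word_Cons_Cons[OF y1 ys(1)])
      (use i Iy1 ac ab neq z in \<open>simp_all add: swaps pairs insert_commute xs_length\<close>)
  ultimately show ?thesis
    using that by blast
qed

lemma braid_eq_Cons_Cons:
  assumes "braid_eq k (l # p) (l' # q)" "braid_eq k u (p @ z)" "braid_eq k v (q @ z)"
  shows "braid_eq k (l # u) (l' # v)"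
proof -
  have "braid_eq k (l # u) (l # p @ z)"
    using braid_eq.ctx[OF assms(2), of "[l]" "[]"] by simp
  moreover have "braid_eq k (l # p @ z) (l' # q @ z)"
    using braid_eq.ctx[OF assms(1), of "[]" z] by simp
  moreover have "braid_eq k (l' # q @ z) (l' # v)"
    using braid_eq.ctx[OF braid_eq.sym[OF assms(3)], of "[l']" "[]"] by simp
  ultimately show ?thesis
    using braid_eq.trans by metis
qed

lemma braid_eq_distinct_heads:
  assumes "distinct xs" "i < j"
    and hu: "reduced_word xs ((i, True) # u) ys" and hv: "reduced_word xs ((j, True) # v) ys"
    and IH: "\<And>r u' v'. 1 \<le> r \<Longrightarrow> r < length xs \<Longrightarrow> length u' = length u \<Longrightarrow>
      reduced_word (swap_adj r xs) u' ys \<Longrightarrow> reduced_word (swap_adj r xs) v' ys \<Longrightarrow>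
      braid_eq (length xs) u' v'"
  shows "braid_eq (length xs) ((i, True) # u) ((j, True) # v)"
proof -
  note i = reduced_word_ConsD(2-4)[OF hu] and j = reduced_word_ConsD(2-4)[OF hv]
  have "length v = length u"
    using length_reduced_word[OF hu assms(1)] length_reduced_word[OF hv assms(1)] by simp
  note IH_v = IH[OF j(1,2) this j(3)]
  show ?thesis
  proof (cases "j = Suc i")
    case True
    obtain z where
      zi: "reduced_word (swap_adj i xs) ((Suc i, True) # (i, True) # z) ys" and
      zj: "reduced_word (swap_adj (Suc i) xs) ((i, True) # (Suc i, True) # z) ys"
      using adjacent_heads_common_tail[OF assms(1) hu hv[unfolded True]] .
    have "braid_eq (length xs) ((i, True) # [(Suc i, True), (i, True)])
        ((Suc i, True) # [(i, True), (Suc i, True)])"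
      using braid_eq.braid[of i "length xs"] i(1) j(2) True by simp
    moreover have "braid_eq (length xs) u ([(Suc i, True), (i, True)] @ z)"
      using IH[OF i(1,2) _ i(3) zi] by simp
    moreover have "braid_eq (length xs) v ([(i, True), (Suc i, True)] @ z)"
      using IH_v zj True by simp
    ultimately show ?thesis
      unfolding True by (rule braid_eq_Cons_Cons)
  next
    case False
    then have far: "i + 1 < j"
      using assms(2) by simp
    obtain z where
      zi: "reduced_word (swap_adj i xs) ((j, True) # z) ys" and
      zj: "reduced_word (swap_adj j xs) ((i, True) # z) ys"
      using far_heads_common_tail[OF assms(1) hu hv far] .
    have "braid_eq (length xs) ((i, True) # [(j, True)]) ((j, True) # [(i, True)])"
      using braid_eq.comm[OF i(1) far j(2)] by simp
    moreover have "braid_eq (length xs) u ([(j, True)] @ z)"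
      using IH[OF i(1,2) _ i(3) zi] by simp
    moreover have "braid_eq (length xs) v ([(i, True)] @ z)"
      using IH_v zj by simp
    ultimately show ?thesis
      by (rule braid_eq_Cons_Cons)
  qed
qed

theorem reduced_words_braid_eq:
  assumes "distinct xs" "reduced_word xs u ys" "reduced_word xs v ys"
  shows "braid_eq (length xs) u v"
  using assms
proof (induction "length u" arbitrary: xs u v rule: less_induct)
  case less
  have same_length: "length v = length u"
    using length_reduced_word less.prems by metis
  show ?case
  proof (cases u)
    case Nil
    then show ?thesis
      using same_length braid_eq.refl by simp
  next
    case (Cons l u')
    then obtain i j b b' v' where u: "u = (i, b) # u'" and v: "v = (j, b') # v'"
      using same_length by (cases v) (auto simp: prod_eq_iff)
    have heads: "b" "b'"
      using reduced_word_ConsD(1) less.prems(2,3) u v by blast+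
    have IH: "braid_eq (length xs) u'' v''"
      if "1 \<le> r" "r < length xs" "length u'' = length u'" "reduced_word (swap_adj r xs) u'' ys"
        "reduced_word (swap_adj r xs) v'' ys" for r u'' v''
      using less.hyps[of u'' "swap_adj r xs" v''] less.prems(1) that u
      by (simp add: distinct_swap_adj)
    have same_tail: "length v' = length u'"
      using same_length u v by simp
    consider "i = j" | "i < j" | "j < i"
      by linarith
    then show ?thesis
    proof cases
      case 1
      have "braid_eq (length xs) u' v'"
        using IH reduced_word_ConsD(2-4) less.prems(2,3) unfolding u v 1 by blast
      then show ?thesis
        using braid_eq.ctx[of "length xs" u' v' "[(i, b)]" "[]"] u v heads 1 by simp
    next
      case 2
      then show ?thesis
        using braid_eq_distinct_heads[OF less.prems(1) 2 _ _ IH] less.prems(2,3) u v heads by simp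
    next
      case 3
      have "braid_eq (length xs) v u"
        using braid_eq_distinct_heads[OF less.prems(1) 3 _ _ IH[unfolded same_tail[symmetric]]]
          less.prems(2,3) u v heads by simp
      then show ?thesis
        by (rule braid_eq.sym)
    qed
  qed
qed

section \<open>Strings of a word\<close>

lemma valid_word_simps [simp]:
  "valid_word n []"
  "valid_word n (Sig i # w) \<longleftrightarrow> 1 \<le> i \<and> i < n \<and> valid_word n w"
  "valid_word n (SigInv i # w) \<longleftrightarrow> 1 \<le> i \<and> i < n \<and> valid_word n w"
  "valid_word n (Eps # w) \<longleftrightarrow> valid_word n w"
  by (auto simp: valid_word_def)

lemma valid_word_append [simp]: "valid_word n (u @ v) \<longleftrightarrow> valid_word n u \<and> valid_word n v"
  by (auto simp: valid_word_def)

fun slots_after :: "gen list \<Rightarrow> (nat \<Rightarrow> nat) \<Rightarrow> (nat \<Rightarrow> nat)" where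
  "slots_after [] st = st"
| "slots_after (Sig i # w) st = slots_after w (sw i st)"
| "slots_after (SigInv i # w) st = slots_after w (sw i st)"
| "slots_after (Eps # w) st = slots_after w st"

lemma sw_eq_comp_transpose: "sw i st = st \<circ> transpose i (Suc i)"
  by (auto simp: sw_def transpose_def)

lemma track_Cons:
  "track (Sig i # w) = track w \<circ> transpose i (Suc i)"
  "track (SigInv i # w) = track w \<circ> transpose i (Suc i)"
  "track (Eps # w) = track w"
  by (auto simp: transpose_def)

lemma slots_after_track: "slots_after w st (track w p) = st p"
  by (induction w st arbitrary: p rule: slots_after.induct) (simp_all add: sw_def)

lemma bij_track: "bij (track w)"
proof (induction w)
  case Nil
  then show ?case by (simp add: id_def[symmetric])
next
  case (Cons g w)
  then show ?case
    by (cases g) (auto simp only: track_Cons intro!: bij_comp bij_transpose)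
qed

lemma track_slots_after: "track w (slots_after w id q) = q"
proof -
  obtain p where "track w p = q"
    using bij_track[of w] by (metis bij_pointE)
  then show ?thesis
    using slots_after_track[of w id p] by simp
qed

lemma slots_after_mem_iff: "slots_after w id q \<in> L \<longleftrightarrow> q \<in> track w ` L"
  using slots_after_track[of w id] track_slots_after[of w q] by force

lemma track_range: "valid_word n w \<Longrightarrow> p \<in> {1..n} \<Longrightarrow> track w p \<in> {1..n}"
  by (induction w p rule: track.induct) auto

lemma bij_betw_sw: "1 \<le> i \<Longrightarrow> i < n \<Longrightarrow> bij_betw st {1..n} {1..n} \<Longrightarrow> bij_betw (sw i st) {1..n} {1..n}"
  unfolding sw_eq_comp_transpose by (rule bij_betw_trans[of _ _ "{1..n}"]) auto

lemma bij_betw_slots_after: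
  "valid_word n w \<Longrightarrow> bij_betw st {1..n} {1..n} \<Longrightarrow> bij_betw (slots_after w st) {1..n} {1..n}"
  by (induction w st rule: slots_after.induct) (use bij_betw_sw in auto)

lemma bij_betw_adjacent_neq:
  assumes "bij_betw st {1..n} {1..n}" "1 \<le> i" "i < n"
  shows "st i \<noteq> st (Suc i)"
  using inj_onD[OF bij_betw_imp_inj_on[OF assms(1)], of i "Suc i"] assms(2,3) by auto

lemma crossings_distinct_labels:
  "valid_word n w \<Longrightarrow> bij_betw st {1..n} {1..n} \<Longrightarrow> (a, b) \<in> set (crossings w st) \<Longrightarrow> a \<noteq> b"
  by (induction w st rule: slots_after.induct) (use bij_betw_sw bij_betw_adjacent_neq in auto)

lemma slots_after_append: "slots_after (u @ v) st = slots_after v (slots_after u st)"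
  by (induction u st rule: slots_after.induct) auto

lemma killed_append: "killed (u @ v) st = killed u st \<union> killed v (slots_after u st)"
  by (induction u st rule: slots_after.induct) auto

lemma crossings_append: "crossings (u @ v) st = crossings u st @ crossings v (slots_after u st)"
  by (induction u st rule: slots_after.induct) auto

lemma track_append: "track (u @ v) p = track v (track u p)"
  by (induction u p rule: track.induct) auto

lemma killed_Eps_free: "Eps \<notin> set w \<Longrightarrow> killed w st = {}"
  by (induction w st rule: slots_after.induct) auto

lemma track_eq_id: "slots_after w id = id \<Longrightarrow> track w p = p"
  using slots_after_track[of w id p] by simp

lemma live_subset: "live n w \<subseteq> {1..n}"
  unfolding live_def by (rule Diff_subset)

lemma tau_eq_iff:
  "tau n w1 = tau n w2 \<longleftrightarrow> live n w1 = live n w2 \<and> (\<forall>a\<in>live n w1. track w1 a = track w2 a)"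
proof
  assume eq: "tau n w1 = tau n w2"
  have "dom (tau n w1) = live n w1" "dom (tau n w2) = live n w2"
    by (auto simp: tau_def dom_def)
  then have "live n w1 = live n w2"
    using eq by simp
  moreover have "track w1 a = track w2 a" if "a \<in> live n w1" for a
    using fun_cong[OF eq, of a] that \<open>live n w1 = live n w2\<close> by (simp add: tau_def)
  ultimately show "live n w1 = live n w2 \<and> (\<forall>a\<in>live n w1. track w1 a = track w2 a)"
    by blast
qed (auto simp: tau_def)

section \<open>The braid on the surviving strings\<close>

definition live_order :: "nat set \<Rightarrow> nat \<Rightarrow> (nat \<Rightarrow> nat) \<Rightarrow> nat list" where
  "live_order L n st = filter (\<lambda>x. x \<in> L) (map st [1..<Suc n])"

(* The position, counted from 1, of slot i among the slots holding strings of L: the index that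
   red gives to a crossing of two such strings at slots i and i + 1. *)
definition rank :: "nat set \<Rightarrow> (nat \<Rightarrow> nat) \<Rightarrow> nat \<Rightarrow> nat" where
  "rank L st i = card {p. 1 \<le> p \<and> p \<le> i \<and> st p \<in> L}"

definition pair_set :: "nat \<times> nat \<Rightarrow> nat set" where
  "pair_set = (\<lambda>(x, y). {x, y})"

definition live_crossings :: "nat set \<Rightarrow> gen list \<Rightarrow> (nat \<Rightarrow> nat) \<Rightarrow> (nat \<times> nat) list" where
  "live_crossings L w st = filter (\<lambda>(x, y). x \<in> L \<and> y \<in> L) (crossings w st)"

lemma
  assumes "L \<subseteq> {1..n}" "bij_betw st {1..n} {1..n}"
  shows distinct_live_order: "distinct (live_order L n st)"
    and length_live_order: "length (live_order L n st) = card L"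
proof -
  have "set [1..<Suc n] = {1..n}" by auto
  then have "distinct (map st [1..<Suc n])" "set (map st [1..<Suc n]) = {1..n}"
    using assms(2) by (simp_all add: distinct_map bij_betw_def)
  then have d: "distinct (live_order L n st)" and s: "set (live_order L n st) = L"
    unfolding live_order_def using assms(1) by auto
  then show "distinct (live_order L n st)" "length (live_order L n st) = card L"
    using distinct_card[OF d] by simp_all
qed

lemma live_order_full: "bij_betw st {1..n} {1..n} \<Longrightarrow> live_order {1..n} n st = map st [1..<Suc n]"
  unfolding live_order_def by (rule filter_True) (auto simp: bij_betw_def)

lemma upt_split_adjacent:
  assumes "1 \<le> i" "i < n"
  shows "[1..<Suc n] = [1..<i] @ i # Suc i # [Suc (Suc i)..<Suc n]"
proof -
  have "[1..<Suc n] = [1..<i] @ [i..<Suc n]"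
    using assms upt_add_eq_append[of 1 i "Suc n - i"] by simp
  also have "[i..<Suc n] = i # Suc i # [Suc (Suc i)..<Suc n]"
    using assms by (simp add: upt_conv_Cons)
  finally show ?thesis .
qed

lemma live_order_split:
  assumes "1 \<le> i" "i < n"
  obtains A C where "live_order L n st = A @ filter (\<lambda>x. x \<in> L) [st i, st (Suc i)] @ C"
    and "live_order L n (sw i st) = A @ filter (\<lambda>x. x \<in> L) [st (Suc i), st i] @ C"
    and "rank L st i = length A + (if st i \<in> L then 1 else 0)"
proof
  define A where "A = filter (\<lambda>x. x \<in> L) (map st [1..<i])"
  define C where "C = filter (\<lambda>x. x \<in> L) (map st [Suc (Suc i)..<Suc n])"
  have "map (sw i st) [1..<i] = map st [1..<i]"
    "map (sw i st) [Suc (Suc i)..<Suc n] = map st [Suc (Suc i)..<Suc n]"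
    by (simp_all add: sw_def)
  then show "live_order L n st = A @ filter (\<lambda>x. x \<in> L) [st i, st (Suc i)] @ C"
    "live_order L n (sw i st) = A @ filter (\<lambda>x. x \<in> L) [st (Suc i), st i] @ C"
    unfolding live_order_def A_def C_def upt_split_adjacent[OF assms] by (simp_all add: sw_def)
  have "length A = card ({p. st p \<in> L} \<inter> {1..<i})"
    unfolding A_def by (simp add: distinct_length_filter comp_def)
  moreover have "{p. 1 \<le> p \<and> p \<le> i \<and> st p \<in> L} =
      ({p. st p \<in> L} \<inter> {1..<i}) \<union> (if st i \<in> L then {i} else {})"
    using assms(1) by (auto simp: order_le_less)
  ultimately show "rank L st i = length A + (if st i \<in> L then 1 else 0)"
    unfolding rank_def by (simp add: card_insert_if)
qed

lemma live_order_sw: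
  assumes "1 \<le> i" "i < n"
  shows "live_order L n (sw i st) =
    (if st i \<in> L \<and> st (Suc i) \<in> L then swap_adj (rank L st i) (live_order L n st)
     else live_order L n st)"
proof -
  obtain A C where "live_order L n st = A @ filter (\<lambda>x. x \<in> L) [st i, st (Suc i)] @ C"
    "live_order L n (sw i st) = A @ filter (\<lambda>x. x \<in> L) [st (Suc i), st i] @ C"
    "rank L st i = length A + (if st i \<in> L then 1 else 0)"
    using live_order_split[OF assms] .
  then show ?thesis
    using swap_adj_append[of A] by auto
qed

lemma
  assumes "1 \<le> i" "i < n" "st i \<in> L" "st (Suc i) \<in> L"
  shows rank_bounds: "0 < rank L st i" "rank L st i < length (live_order L n st)"
    and adj_pair_rank: "adj_pair (rank L st i) (live_order L n st) = {st i, st (Suc i)}"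
proof -
  obtain A C where "live_order L n st = A @ filter (\<lambda>x. x \<in> L) [st i, st (Suc i)] @ C"
    "rank L st i = length A + (if st i \<in> L then 1 else 0)"
    using live_order_split[OF assms(1,2)] by metis
  then show "0 < rank L st i" "rank L st i < length (live_order L n st)"
    "adj_pair (rank L st i) (live_order L n st) = {st i, st (Suc i)}"
    using assms(3,4) adj_pair_append[of A] by simp_all
qed

lemma length_live_order_sw: "1 \<le> i \<Longrightarrow> i < n \<Longrightarrow> length (live_order L n (sw i st)) = length (live_order L n st)"
  by (simp add: live_order_sw)

lemma red_sigma:
  "red L (Sig i # w) st =
     (if st i \<in> L \<and> st (Suc i) \<in> L then [(rank L st i, True)] else []) @ red L w (sw i st)"
  "red L (SigInv i # w) st =
     (if st i \<in> L \<and> st (Suc i) \<in> L then [(rank L st i, False)] else []) @ red L w (sw i st)"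
  by (simp_all add: rank_def)

declare red.simps(2,3) [simp del]

lemma live_crossings_simps [simp]:
  "live_crossings L [] st = []"
  "live_crossings L (Sig i # w) st =
     (if st i \<in> L \<and> st (Suc i) \<in> L then [(st i, st (Suc i))] else []) @ live_crossings L w (sw i st)"
  "live_crossings L (SigInv i # w) st =
     (if st i \<in> L \<and> st (Suc i) \<in> L then [(st i, st (Suc i))] else []) @ live_crossings L w (sw i st)"
  "live_crossings L (Eps # w) st = live_crossings L w st"
  by (simp_all add: live_crossings_def)

lemma red_letters_bounded:
  "valid_word n w \<Longrightarrow> l \<in> set (red L w st) \<Longrightarrow> 0 < fst l \<and> fst l < length (live_order L n st)"
  by (induction w st rule: slots_after.induct)
    (auto simp: red_sigma length_live_order_sw rank_bounds split: if_splits)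

lemma red_positive: "positive_word w \<Longrightarrow> l \<in> set (red L w st) \<Longrightarrow> snd l"
  by (induction w st rule: slots_after.induct)
    (auto simp: red_sigma positive_word_def split: if_splits)

lemma act_red:
  "valid_word n w \<Longrightarrow> act (live_order L n st) (red L w st) = live_order L n (slots_after w st)"
  by (induction w st rule: slots_after.induct) (auto simp: red_sigma act_append live_order_sw)

lemma swapped_pairs_red:
  "valid_word n w \<Longrightarrow>
   swapped_pairs (live_order L n st) (red L w st) = map pair_set (live_crossings L w st)"
  by (induction w st rule: slots_after.induct)
    (auto simp: red_sigma swapped_pairs_append live_order_sw adj_pair_rank pair_set_def)

lemma reduced_word_red:
  assumes "valid_word n w" "positive_word w" "distinct (map pair_set (live_crossings L w st))"
  shows "reduced_word (live_order L n st) (red L w st) (live_order L n (slots_after w st))"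
  using assms red_letters_bounded[OF assms(1)] red_positive[OF assms(2)]
  unfolding reduced_word_def positive_letters_def by (simp add: act_red swapped_pairs_red Suc_le_eq)

lemma filter_map_eq_iff:
  assumes "\<forall>x\<in>set xs. P (f x) \<longleftrightarrow> P (g x)"
  shows "filter P (map f xs) = filter P (map g xs) \<longleftrightarrow> (\<forall>x\<in>set xs. P (f x) \<longrightarrow> f x = g x)"
  using assms by (induction xs) auto

lemma live_order_slots_after_eq_iff:
  assumes "valid_word n w1" "valid_word n w2" "L \<subseteq> {1..n}" "track w1 ` L = track w2 ` L"
  shows "live_order L n (slots_after w1 id) = live_order L n (slots_after w2 id) \<longleftrightarrow>
    (\<forall>a\<in>L. track w1 a = track w2 a)"
proof -
  have same_live: "\<forall>q\<in>set [1..<Suc n]. slots_after w1 id q \<in> L \<longleftrightarrow> slots_after w2 id q \<in> L"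
    using assms(4) by (simp add: slots_after_mem_iff)
  have "(\<forall>q\<in>set [1..<Suc n]. slots_after w1 id q \<in> L \<longrightarrow> slots_after w1 id q = slots_after w2 id q)
      \<longleftrightarrow> (\<forall>a\<in>L. track w1 a = track w2 a)"
  proof
    assume agree: "\<forall>q\<in>set [1..<Suc n]. slots_after w1 id q \<in> L \<longrightarrow> slots_after w1 id q = slots_after w2 id q"
    show "\<forall>a\<in>L. track w1 a = track w2 a"
    proof
      fix a assume a: "a \<in> L"
      have "a \<in> {1..n}"
        using a assms(3) by blast
      then have "track w1 a \<in> {1..n}"
        by (rule track_range[OF assms(1)])
      then have "track w1 a \<in> set [1..<Suc n]"
        by auto
      moreover have "slots_after w1 id (track w1 a) = a"
        using slots_after_track[of w1 id a] by simp
      ultimately have "slots_after w2 id (track w1 a) = a"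
        using agree a by metis
      then show "track w1 a = track w2 a"
        using track_slots_after[of w2 "track w1 a"] by simp
    qed
  next
    assume agree: "\<forall>a\<in>L. track w1 a = track w2 a"
    show "\<forall>q\<in>set [1..<Suc n]. slots_after w1 id q \<in> L \<longrightarrow> slots_after w1 id q = slots_after w2 id q"
    proof (intro ballI impI)
      fix q assume "slots_after w1 id q \<in> L"
      then have "track w2 (slots_after w1 id q) = q"
        using agree track_slots_after[of w1 q] by metis
      then show "slots_after w1 id q = slots_after w2 id q"
        using slots_after_track[of w2 id "slots_after w1 id q"] by simp
    qed
  qed
  then show ?thesis
    unfolding live_order_def
      filter_map_eq_iff[of "[1..<Suc n]" "\<lambda>x. x \<in> L" "slots_after w1 id" "slots_after w2 id", OF same_live] .
qed

section \<open>Uniqueness\<close>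

lemma pb_eq_refl: "pb_eq n w w"
  by (simp add: pb_eq_def braid_eq.refl)

lemma pb_eq_sym:
  assumes "pb_eq n w1 w2"
  shows "pb_eq n w2 w1"
proof -
  have live: "live n w2 = live n w1"
    using assms by (simp add: pb_eq_def)
  have braid: "braid_eq (card (live n w1)) (red (live n w1) w1 id) (red (live n w1) w2 id)"
    using live assms by (simp add: pb_eq_def)
  show ?thesis
    using live assms braid_eq.sym[OF braid] by (simp add: pb_eq_def)
qed

lemma pb_eq_trans:
  assumes "pb_eq n w1 w2" "pb_eq n w2 w3"
  shows "pb_eq n w1 w3"
proof -
  have live: "live n w2 = live n w1" "live n w3 = live n w1"
    using assms by (simp_all add: pb_eq_def)
  have braid: "braid_eq (card (live n w1)) (red (live n w1) w1 id) (red (live n w1) w2 id)"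
    "braid_eq (card (live n w1)) (red (live n w1) w2 id) (red (live n w1) w3 id)"
    using live assms by (simp_all add: pb_eq_def)
  show ?thesis
    using live assms braid_eq.trans[OF braid] by (simp add: pb_eq_def)
qed

lemma pb_eq_imp_tau_eq:
  assumes "valid_word n w1" "valid_word n w2" "pb_eq n w1 w2"
  shows "tau n w1 = tau n w2"
proof -
  define L where "L = live n w1"
  have L2: "live n w2 = L"
    using assms(3) by (simp add: pb_eq_def L_def)
  have images: "track w1 ` L = track w2 ` L"
    and braid: "braid_eq (card L) (red L w1 id) (red L w2 id)"
    using L2 assms(3) unfolding L_def by (simp_all add: pb_eq_def)
  have L_sub: "L \<subseteq> {1..n}"
    unfolding L_def by (rule live_subset)
  have "length (live_order L n id) = card L"
    using length_live_order[OF L_sub bij_betw_id] .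
  then have "act (live_order L n id) (red L w1 id) = act (live_order L n id) (red L w2 id)"
    by (rule braid_eq_act[OF braid])
  then have "live_order L n (slots_after w1 id) = live_order L n (slots_after w2 id)"
    using act_red[OF assms(1)] act_red[OF assms(2)] by simp
  then show ?thesis
    using live_order_slots_after_eq_iff[OF assms(1,2) L_sub images] L2
    unfolding tau_eq_iff L_def by simp
qed

lemma distinct_map_iff_length_filter_le_1:
  "distinct (map f xs) \<longleftrightarrow> (\<forall>z. length (filter (\<lambda>x. f x = z) xs) \<le> 1)"
proof (induction xs)
  case (Cons x xs)
  have "f x \<notin> f ` set xs \<longleftrightarrow> length (filter (\<lambda>y. f y = f x) xs) = 0"
    by (auto simp: filter_empty_conv image_iff)
  then show ?case
    using Cons.IH by (auto simp: le_Suc_eq)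
qed simp

lemma filter_live_crossings_pair:
  assumes "a \<in> L" "b \<in> L"
  shows "filter (\<lambda>e. pair_set e = {a, b}) (live_crossings L w st) =
    filter (\<lambda>(x, y). {x, y} = {a, b}) (crossings w st)"
  unfolding live_crossings_def filter_filter
proof (rule filter_cong[OF HOL.refl])
  fix e :: "nat \<times> nat"
  obtain x y where e: "e = (x, y)"
    by (cases e)
  have "x \<in> L \<and> y \<in> L" if "{x, y} = {a, b}"
  proof -
    have "{x, y} \<subseteq> L"
      using assms unfolding that by simp
    then show ?thesis
      by simp
  qed
  then show "(case e of (x, y) \<Rightarrow> x \<in> L \<and> y \<in> L) \<and> pair_set e = {a, b} \<longleftrightarrow>
      (case e of (x, y) \<Rightarrow> {x, y} = {a, b})"
    unfolding e pair_set_def by (simp only: prod.case) blast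
qed

lemma crosses_at_most_once_iff:
  assumes "valid_word n w"
  shows "crosses_at_most_once n w \<longleftrightarrow> distinct (map pair_set (live_crossings (live n w) w id))"
proof
  assume once: "crosses_at_most_once n w"
  show "distinct (map pair_set (live_crossings (live n w) w id))"
    unfolding distinct_map_iff_length_filter_le_1
  proof
    fix z
    show "length (filter (\<lambda>e. pair_set e = z) (live_crossings (live n w) w id)) \<le> 1"
    proof (cases "\<exists>e\<in>set (live_crossings (live n w) w id). pair_set e = z")
      case True
      then obtain a b where ab_live: "(a, b) \<in> set (live_crossings (live n w) w id)"
        and z: "z = {a, b}"
        unfolding pair_set_def by fast
      then have ab: "(a, b) \<in> set (crossings w id)" and live: "a \<in> live n w" "b \<in> live n w"
        by (simp_all add: live_crossings_def)
      have "a \<noteq> b"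
        by (rule crossings_distinct_labels[OF assms bij_betw_id ab])
      then have "length (filter (\<lambda>(x, y). {x, y} = {a, b}) (crossings w id)) \<le> 1"
        using once live unfolding crosses_at_most_once_def by blast
      then show ?thesis
        unfolding z filter_live_crossings_pair[OF live] .
    next
      case False
      then show ?thesis
        by (simp add: filter_empty_conv)
    qed
  qed
next
  assume "distinct (map pair_set (live_crossings (live n w) w id))"
  then have once: "length (filter (\<lambda>e. pair_set e = z) (live_crossings (live n w) w id)) \<le> 1" for z
    unfolding distinct_map_iff_length_filter_le_1 by blast
  show "crosses_at_most_once n w"
    unfolding crosses_at_most_once_def
  proof (intro ballI impI)
    fix a b assume ab: "a \<in> live n w" "b \<in> live n w"
    show "length (filter (\<lambda>(x, y). {x, y} = {a, b}) (crossings w id)) \<le> 1"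
      using once[of "{a, b}"] unfolding filter_live_crossings_pair[OF ab] .
  qed
qed

theorem positive_permutation_braid_unique:
  assumes "valid_word n w1" "positive_word w1" "crosses_at_most_once n w1"
    and "valid_word n w2" "positive_word w2" "crosses_at_most_once n w2"
    and "tau n w1 = tau n w2"
  shows "pb_eq n w1 w2"
proof -
  define L where "L = live n w1"
  have L2: "live n w2 = L" and tracks: "\<forall>a\<in>L. track w1 a = track w2 a"
    using assms(7) unfolding tau_eq_iff L_def by auto
  then have images: "track w1 ` L = track w2 ` L"
    by auto
  have L_sub: "L \<subseteq> {1..n}"
    unfolding L_def by (rule live_subset)
  define xs where "xs = live_order L n id"
  define ys where "ys = live_order L n (slots_after w1 id)"
  have ys2: "ys = live_order L n (slots_after w2 id)"
    using live_order_slots_after_eq_iff[OF assms(1,4) L_sub images] tracks unfolding ys_def by simp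
  have "reduced_word xs (red L w1 id) ys"
    using reduced_word_red[OF assms(1,2)] crosses_at_most_once_iff[OF assms(1)] assms(3)
    unfolding xs_def ys_def L_def by simp
  moreover have "reduced_word xs (red L w2 id) ys"
    using reduced_word_red[OF assms(4,5)] crosses_at_most_once_iff[OF assms(4)] assms(6) L2
    unfolding xs_def ys2 by simp
  ultimately have "braid_eq (length xs) (red L w1 id) (red L w2 id)"
    using reduced_words_braid_eq distinct_live_order[OF L_sub bij_betw_id] unfolding xs_def by blast
  moreover have "length xs = card L"
    unfolding xs_def by (rule length_live_order[OF L_sub bij_betw_id])
  ultimately show ?thesis
    unfolding pb_eq_def using L2 images L_def by simp
qed

theorem IBn_plus_tau_injective:
  assumes "valid_word n w1" "valid_word n w2" "in_IBn_plus n w1" "in_IBn_plus n w2"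
    and "tau n w1 = tau n w2"
  shows "pb_eq n w1 w2"
proof -
  obtain v1 where v1: "valid_word n v1" "positive_word v1" "crosses_at_most_once n v1" "pb_eq n w1 v1"
    using assms(3) unfolding in_IBn_plus_def by blast
  obtain v2 where v2: "valid_word n v2" "positive_word v2" "crosses_at_most_once n v2" "pb_eq n w2 v2"
    using assms(4) unfolding in_IBn_plus_def by blast
  have "tau n v1 = tau n v2"
    using pb_eq_imp_tau_eq[OF assms(1) v1(1,4)] pb_eq_imp_tau_eq[OF assms(2) v2(1,4)] assms(5) by simp
  then have "pb_eq n v1 v2"
    by (rule positive_permutation_braid_unique[OF v1(1-3) v2(1-3)])
  then show ?thesis
    using pb_eq_trans[OF v1(4) pb_eq_trans[OF _ pb_eq_sym[OF v2(4)]]] by blast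
qed

section \<open>Existence\<close>

definition slide_down :: "nat \<Rightarrow> gen list" where
  "slide_down j = map Sig (rev [1..<j])"

definition slide_up :: "nat \<Rightarrow> gen list" where
  "slide_up j = map Sig [1..<j]"

(* Drag the string in slot j to slot 1 across the strings in front of it, cut it with Eps,
   and move those strings back. *)
definition kill_word :: "nat \<Rightarrow> gen list" where
  "kill_word j = slide_down j @ Eps # slide_up j"

definition kill_words :: "nat list \<Rightarrow> gen list" where
  "kill_words ks = concat (map kill_word ks)"

lemma slide_down_Suc: "slide_down (Suc j) = (if j = 0 then [] else Sig j # slide_down j)"
  by (simp add: slide_down_def)

lemma slide_letters: "Eps \<notin> set (slide_down j)" "Eps \<notin> set (slide_up j)"
  "SigInv i \<notin> set (slide_down j)" "SigInv i \<notin> set (slide_up j)"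
  "j \<le> n \<Longrightarrow> valid_word n (slide_down j)" "j \<le> n \<Longrightarrow> valid_word n (slide_up j)"
  by (auto simp: slide_down_def slide_up_def valid_word_def)

lemma slots_after_slide_down:
  "1 \<le> j \<Longrightarrow> slots_after (slide_down j) st =
     (\<lambda>p. if p = 1 then st j else if 2 \<le> p \<and> p \<le> j then st (p - 1) else st p)"
proof (induction j arbitrary: st)
  case (Suc j)
  show ?case
  proof (cases "j = 0")
    case False
    then have "slots_after (slide_down (Suc j)) st = slots_after (slide_down j) (sw j st)"
      by (simp add: slide_down_def)
    also have "\<dots> = (\<lambda>p. if p = 1 then st (Suc j) else if 2 \<le> p \<and> p \<le> Suc j then st (p - 1) else st p)"
      using Suc.IH False by (auto intro!: ext simp: sw_def)
    finally show ?thesis .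
  qed (auto simp: slide_down_def)
qed simp

lemma slots_after_slide_up:
  "1 \<le> j \<Longrightarrow> slots_after (slide_up j) st =
     (\<lambda>p. if p = j then st 1 else if 1 \<le> p \<and> p < j then st (p + 1) else st p)"
proof (induction j arbitrary: st)
  case (Suc j)
  show ?case
  proof (cases "j = 0")
    case False
    then have "slots_after (slide_up (Suc j)) st = sw j (slots_after (slide_up j) st)"
      by (simp add: slide_up_def slots_after_append)
    also have "\<dots> = (\<lambda>p. if p = Suc j then st 1 else if 1 \<le> p \<and> p < Suc j then st (p + 1) else st p)"
      using Suc.IH False by (auto intro!: ext simp: sw_def)
    finally show ?thesis .
  qed (auto simp: slide_up_def)
qed simp

lemma crossings_slide_down: "e \<in> set (crossings (slide_down j) st) \<Longrightarrow> fst e = st j \<or> snd e = st j"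
proof (induction j arbitrary: st)
  case (Suc j)
  show ?case
  proof (cases "j = 0")
    case False
    then consider "e = (st j, st (Suc j))" | "e \<in> set (crossings (slide_down j) (sw j st))"
      using Suc.prems by (auto simp: slide_down_Suc)
    then show ?thesis
    proof cases
      case 2
      then show ?thesis
        using Suc.IH[OF 2] by (simp add: sw_def)
    qed simp
  qed (use Suc.prems in \<open>simp add: slide_down_Suc\<close>)
qed (simp add: slide_down_def)

lemma crossings_slide_up: "e \<in> set (crossings (slide_up j) st) \<Longrightarrow> fst e = st 1 \<or> snd e = st 1"
proof (induction j arbitrary: st)
  case (Suc j)
  show ?case
  proof (cases "j = 0")
    case False
    then have "slots_after (slide_up j) st j = st 1"
      by (simp add: slots_after_slide_up)
    then show ?thesis
      using Suc False by (auto simp: slide_up_def crossings_append)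
  qed (use Suc.prems in \<open>simp add: slide_up_def\<close>)
qed (simp add: slide_up_def)

lemma
  assumes "1 \<le> j"
  shows slots_after_kill_word: "slots_after (kill_word j) id = id"
    and killed_kill_word: "killed (kill_word j) id = {j}"
    and crossings_kill_word: "e \<in> set (crossings (kill_word j) id) \<Longrightarrow> fst e = j \<or> snd e = j"
proof -
  have down: "slots_after (slide_down j) id 1 = j"
    using slots_after_slide_down[OF assms] by simp
  show "slots_after (kill_word j) id = id"
    using assms by (auto simp: kill_word_def slots_after_append slots_after_slide_down slots_after_slide_up)
  show "killed (kill_word j) id = {j}"
    using down by (simp add: kill_word_def killed_append killed_Eps_free slide_letters)
  show "fst e = j \<or> snd e = j" if "e \<in> set (crossings (kill_word j) id)"
    using that down crossings_slide_down[of e j id] crossings_slide_up[of e j "slots_after (slide_down j) id"]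
    by (auto simp: kill_word_def crossings_append)
qed

lemma valid_kill_word: "j \<le> n \<Longrightarrow> valid_word n (kill_word j)"
  by (simp add: kill_word_def slide_letters)

lemma positive_kill_word: "positive_word (kill_word j)"
  by (simp add: kill_word_def positive_word_def slide_letters)

lemma kill_words_simps: "kill_words [] = []" "kill_words (k # ks) = kill_word k @ kill_words ks"
  by (simp_all add: kill_words_def)

lemma
  assumes "\<forall>k\<in>set ks. 1 \<le> k \<and> k \<le> n"
  shows slots_after_kill_words: "slots_after (kill_words ks) id = id"
    and killed_kill_words: "killed (kill_words ks) id = set ks"
    and crossings_kill_words:
      "e \<in> set (crossings (kill_words ks) id) \<Longrightarrow> fst e \<in> set ks \<or> snd e \<in> set ks"
    and valid_kill_words: "valid_word n (kill_words ks)"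
proof -
  show slots: "slots_after (kill_words ks) id = id"
    using assms by (induction ks) (simp_all add: kill_words_simps slots_after_append slots_after_kill_word)
  show "killed (kill_words ks) id = set ks"
    using assms by (induction ks) (simp_all add: kill_words_simps killed_append slots_after_kill_word killed_kill_word)
  show "fst e \<in> set ks \<or> snd e \<in> set ks" if "e \<in> set (crossings (kill_words ks) id)"
    using assms that
  proof (induction ks)
    case (Cons k ks)
    have "1 \<le> k"
      using Cons.prems(1) by simp
    then have "e \<in> set (crossings (kill_word k) id) \<or> e \<in> set (crossings (kill_words ks) id)"
      using Cons.prems(2) unfolding kill_words_simps crossings_append slots_after_kill_word[OF \<open>1 \<le> k\<close>]
      by simp
    then show ?case
    proof
      assume "e \<in> set (crossings (kill_word k) id)"
      then have "fst e = k \<or> snd e = k"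
        by (rule crossings_kill_word[OF \<open>1 \<le> k\<close>])
      then show ?case
        by auto
    next
      assume "e \<in> set (crossings (kill_words ks) id)"
      then show ?case
        using Cons.IH Cons.prems(1) by (auto simp: id_def)
    qed
  qed (simp add: kill_words_simps)
  show "valid_word n (kill_words ks)"
    using assms by (induction ks) (simp_all add: kill_words_simps valid_kill_word)
qed

lemma positive_kill_words: "positive_word (kill_words ks)"
  using positive_kill_word by (induction ks) (auto simp: kill_words_simps positive_word_def)

lemma rank_full:
  assumes "bij_betw st {1..n} {1..n}" "1 \<le> i" "i < n"
  shows "rank {1..n} st i = i"
proof -
  have "{p. 1 \<le> p \<and> p \<le> i \<and> st p \<in> {1..n}} = {1..i}"
    using assms by (auto simp: bij_betw_def)
  then show ?thesis
    unfolding rank_def by simp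
qed

lemma red_sig_word:
  "positive_letters n u \<Longrightarrow> bij_betw st {1..n} {1..n} \<Longrightarrow>
   red {1..n} (map (\<lambda>l. Sig (fst l)) u) st = u"
proof (induction u arbitrary: st)
  case (Cons l u)
  obtain r b where l: "l = (r, b)"
    by (cases l)
  have r: "1 \<le> r" "r < n" "b" and u: "positive_letters n u"
    using Cons.prems(1) l by (auto simp: positive_letters_def)
  have "st r \<in> {1..n}" "st (Suc r) \<in> {1..n}"
    using Cons.prems(2) r by (auto simp: bij_betw_def)
  then show ?case
    using Cons.IH[OF u bij_betw_sw[OF r(1,2) Cons.prems(2)]] l r rank_full[OF Cons.prems(2) r(1,2)]
    by (simp add: red_sigma)
qed simp

lemma permutation_braid_exists:
  assumes "bij_betw h {1..n} {1..n}"
  obtains P where "valid_word n P" "positive_word P" "Eps \<notin> set P" "crosses_at_most_once n P"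
    "\<And>q. q \<in> {1..n} \<Longrightarrow> slots_after P id q = h q"
proof -
  define xs where "xs = [1..<Suc n]"
  have xs: "distinct xs" "set xs = {1..n}" "length xs = n"
    unfolding xs_def by auto
  have "distinct (map h xs)" "set (map h xs) = set xs"
    using assms xs by (simp_all add: distinct_map bij_betw_def)
  then obtain u where u: "reduced_word xs u (map h xs)"
    using reduced_word_exists xs(1) by metis
  define P where "P = map (\<lambda>l. Sig (fst l)) u"
  have letters: "positive_letters n u"
    using u xs(3) by (simp add: reduced_word_def)
  then have P: "valid_word n P" "positive_word P" "Eps \<notin> set P"
    unfolding P_def positive_letters_def valid_word_def positive_word_def by auto
  have red: "red {1..n} P id = u"
    unfolding P_def by (rule red_sig_word[OF letters bij_betw_id])
  have order_id: "live_order {1..n} n id = xs"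
    using live_order_full[OF bij_betw_id] unfolding xs_def by simp
  have live: "live n P = {1..n}"
    using killed_Eps_free[OF P(3)] by (simp add: live_def)
  have "map (slots_after P id) xs = live_order {1..n} n (slots_after P id)"
    using live_order_full[OF bij_betw_slots_after[OF P(1) bij_betw_id]] unfolding xs_def by simp
  also have "\<dots> = map h xs"
    using act_red[OF P(1), of "{1..n}" id] u unfolding red order_id reduced_word_def by simp
  finally have slots: "slots_after P id q = h q" if "q \<in> {1..n}" for q
    using that xs(2) by (metis map_eq_conv)
  have "distinct (map pair_set (live_crossings {1..n} P id))"
    using swapped_pairs_red[OF P(1), of "{1..n}" id] u unfolding red order_id reduced_word_def by simp
  then have "crosses_at_most_once n P"
    using crosses_at_most_once_iff[OF P(1)] live by simp
  then show ?thesis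
    using that P slots by blast
qed

lemma partial_perm_inverse_extension:
  assumes "partial_perm n s"
  obtains h where "bij_betw h {1..n} {1..n}" "\<And>p q. s p = Some q \<Longrightarrow> h q = p"
proof -
  define D where "D = dom s"
  define R where "R = ran s"
  define f where "f p = the (s p)" for p
  have DR: "D \<subseteq> {1..n}" "R \<subseteq> {1..n}" "inj_on s D"
    using assms unfolding partial_perm_def D_def R_def by auto
  have s_f: "s p = Some (f p)" if "p \<in> D" for p
    using that unfolding D_def f_def by auto
  have "inj_on f D"
    using DR(3) s_f by (metis inj_on_def)
  moreover have "f ` D = R"
    unfolding R_def ran_def D_def f_def by force
  ultimately have f: "bij_betw f D R"
    by (simp add: bij_betw_def)
  have "finite D" "finite R"
    using DR(1,2) finite_subset by blast+
  then have "card ({1..n} - R) = card ({1..n} - D)"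
    using bij_betw_same_card[OF f] DR(1,2) by (simp add: card_Diff_subset)
  then obtain g where g: "bij_betw g ({1..n} - R) ({1..n} - D)"
    using finite_same_card_bij by (metis finite_Diff finite_atLeastAtMost)
  define h where "h q = (if q \<in> R then inv_into D f q else g q)" for q
  have "bij_betw h R D"
    using bij_betw_inv_into[OF f] by (rule bij_betw_cong[THEN iffD1, rotated]) (simp add: h_def)
  moreover have "bij_betw h ({1..n} - R) ({1..n} - D)"
    using g by (rule bij_betw_cong[THEN iffD1, rotated]) (simp add: h_def)
  ultimately have "bij_betw h (R \<union> ({1..n} - R)) (D \<union> ({1..n} - D))"
    by (rule bij_betw_combine) blast
  moreover have "R \<union> ({1..n} - R) = {1..n}" "D \<union> ({1..n} - D) = {1..n}"
    using DR by auto
  ultimately have "bij_betw h {1..n} {1..n}"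
    by simp
  moreover have "h q = p" if "s p = Some q" for p q
  proof -
    have "p \<in> D" "f p = q" "q \<in> R"
      using that unfolding D_def R_def f_def ran_def by auto
    then show ?thesis
      using inv_into_f_f[OF \<open>inj_on f D\<close>] unfolding h_def by auto
  qed
  ultimately show ?thesis
    using that by blast
qed

lemma live_crossings_subset:
  "L \<subseteq> M \<Longrightarrow> live_crossings L w st = filter (\<lambda>(x, y). x \<in> L \<and> y \<in> L) (live_crossings M w st)"
  unfolding live_crossings_def filter_filter by (rule filter_cong[OF HOL.refl]) auto

lemma
  assumes ks: "\<forall>k\<in>set ks. 1 \<le> k \<and> k \<le> n"
    and P: "valid_word n P" "positive_word P" "Eps \<notin> set P" "crosses_at_most_once n P"
  shows valid_kill_words_append: "valid_word n (kill_words ks @ P)"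
    and positive_kill_words_append: "positive_word (kill_words ks @ P)"
    and live_kill_words_append: "live n (kill_words ks @ P) = {1..n} - set ks"
    and track_kill_words_append: "track (kill_words ks @ P) p = track P p"
    and crosses_at_most_once_kill_words_append: "crosses_at_most_once n (kill_words ks @ P)"
proof -
  define D where "D = {1..n} - set ks"
  show valid: "valid_word n (kill_words ks @ P)"
    using valid_kill_words[OF ks] P(1) by simp
  show "positive_word (kill_words ks @ P)"
    using positive_kill_words P(2) by (auto simp: positive_word_def)
  show live: "live n (kill_words ks @ P) = D"
    using killed_Eps_free[OF P(3)] unfolding D_def
    by (auto simp: live_def killed_append slots_after_kill_words[OF ks] killed_kill_words[OF ks])
  show "track (kill_words ks @ P) p = track P p"
    using track_eq_id[OF slots_after_kill_words[OF ks]] by (simp add: track_append)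
  have "filter (\<lambda>(x, y). x \<in> D \<and> y \<in> D) (crossings (kill_words ks) id) = []"
    using crossings_kill_words[OF ks] unfolding D_def by (fastforce simp: filter_empty_conv)
  then have "live_crossings D (kill_words ks @ P) id = live_crossings D P id"
    by (simp add: live_crossings_def crossings_append slots_after_kill_words[OF ks])
  moreover have "live n P = {1..n}"
    using killed_Eps_free[OF P(3)] by (simp add: live_def)
  then have "distinct (map pair_set (live_crossings {1..n} P id))"
    using P(4) crosses_at_most_once_iff[OF P(1)] by simp
  then have "distinct (map pair_set (live_crossings D P id))"
    using live_crossings_subset[of D "{1..n}"] unfolding D_def by (simp add: distinct_map_filter)
  ultimately show "crosses_at_most_once n (kill_words ks @ P)"
    using crosses_at_most_once_iff[OF valid] live by simp
qed

theorem partial_perm_realised: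
  assumes "partial_perm n s"
  shows "\<exists>w. valid_word n w \<and> in_IBn_plus n w \<and> tau n w = s"
proof -
  obtain h where h: "bij_betw h {1..n} {1..n}" "\<And>p q. s p = Some q \<Longrightarrow> h q = p"
    using partial_perm_inverse_extension[OF assms] by blast
  obtain P where P: "valid_word n P" "positive_word P" "Eps \<notin> set P" "crosses_at_most_once n P"
    and P_slots: "\<And>q. q \<in> {1..n} \<Longrightarrow> slots_after P id q = h q"
    using permutation_braid_exists[OF h(1)] by blast
  have dom_sub: "dom s \<subseteq> {1..n}" and ran_sub: "ran s \<subseteq> {1..n}"
    using assms by (simp_all add: partial_perm_def)
  define ks where "ks = sorted_list_of_set ({1..n} - dom s)"
  have ks: "\<forall>k\<in>set ks. 1 \<le> k \<and> k \<le> n"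
    by (simp add: ks_def)
  define w where "w = kill_words ks @ P"
  have live: "live n w = dom s"
    using live_kill_words_append[OF ks P] dom_sub by (auto simp: w_def ks_def)
  have "in_IBn_plus n w"
    unfolding in_IBn_plus_def w_def
    using valid_kill_words_append[OF ks P] positive_kill_words_append[OF ks P]
      crosses_at_most_once_kill_words_append[OF ks P] pb_eq_refl by blast
  moreover have "tau n w p = s p" for p
  proof (cases "s p")
    case (Some q)
    then have "q \<in> {1..n}"
      using ran_sub by (auto simp: ran_def)
    then have "slots_after P id q = p"
      using P_slots h(2)[OF Some] by simp
    then have "track w p = q"
      using track_slots_after[of P q] track_kill_words_append[OF ks P] by (simp add: w_def)
    then show ?thesis
      using Some live by (simp add: tau_def domIff)
  qed (use live in \<open>simp add: tau_def domIff\<close>)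
  ultimately show ?thesis
    using valid_kill_words_append[OF ks P] unfolding w_def by blast
qed

theorem mainTheorem1:
  fixes n :: nat
  assumes "n \<ge> 1"
  shows "(\<forall>w1 w2. valid_word n w1 \<longrightarrow> valid_word n w2 \<longrightarrow>
            in_IBn_plus n w1 \<longrightarrow> in_IBn_plus n w2 \<longrightarrow>
            tau n w1 = tau n w2 \<longrightarrow> pb_eq n w1 w2)
       \<and> (\<forall>s. partial_perm n s \<longrightarrow> (\<exists>w. valid_word n w \<and> in_IBn_plus n w \<and> tau n w = s))"
  using IBn_plus_tau_injective partial_perm_realised by blast

end
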